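(* If $G$ is a finite directed acyclic graph with at least one edge, then \[\tilde{\chi}(\mathrm{DT}(G))=-\prod_{v\in V(G)\setminus R}(1-d^-(v)),\] where $R$ is the set of vertices of $G$ without edges directed to them.
   Context: A directed acyclic graph has no directed cycles. A directed forest is a set of edges which, as a graph, is acyclic with at most one edge directed to each vertex. $\mathrm{DT}(G)$ is the simplicial complex with vertex set $E(G)$ whose simplices are the directed forests. $d^-(v)$ denotes the number of edges of $G$ directed to $v$, and $\tilde\chi$ is the reduced Euler characteristic. *)

theory Defs
  imports "Graph_Theory.Digraph"
begin

text \<open>A digraph is acyclic (a DAG) if it has no directed cycle, i.e. the
  transitive closure of its arc relation is irreflexive (loops are cycles).\<close>
definition dag :: "('a,'b) pre_digraph \<Rightarrow> bool" where
  "dag G \<longleftrightarrow> acyclic (arcs_ends G)"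

definition directed_forest :: "('a,'b) pre_digraph \<Rightarrow> 'b set \<Rightarrow> bool" where
  "directed_forest G F \<longleftrightarrow> F \<subseteq> arcs G \<and> acyclic (arc_to_ends G ` F)
     \<and> (\<forall>v. card {e \<in> F. head G e = v} \<le> 1)"

definition DT :: "('a,'b) pre_digraph \<Rightarrow> 'b set set" where
  "DT G = {F. directed_forest G F}"

text \<open>Reduced Euler characteristic of a finite simplicial complex given as its set of
  faces (including the empty face): sum over faces F of (-1)^(dim F) = (-1)^(|F|-1).\<close>
definition reduced_euler_char :: "'b set set \<Rightarrow> int" where
  "reduced_euler_char K = (\<Sum>F\<in>K. - ((-1) ^ card F))"

end

theory Submission
  imports Defs
begin

(* In a DAG every set of arcs is acyclic, so the faces of DT(G) are exactly the arc
   sets with pairwise distinct heads. Grouping these by the arcs into a fixed vertex v,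
   a face uses either no arc into v (sign unchanged) or exactly one of the d^-(v) of
   them (sign flipped); hence the signed count of faces factors as the product of
   1 - d^-(v) over the vertices, and the sources contribute the factor 1. *)

definition inj_subsets :: "('b \<Rightarrow> 'a) \<Rightarrow> 'b set \<Rightarrow> 'b set set" where
  "inj_subsets h A = {F. F \<subseteq> A \<and> inj_on h F}"

lemma inj_subsets_empty [simp]: "inj_subsets h {} = {{}}"
  by (auto simp: inj_subsets_def)

lemma finite_inj_subsets: "finite A \<Longrightarrow> finite (inj_subsets h A)"
  by (rule finite_subset[of _ "Pow A"]) (auto simp: inj_subsets_def)

lemma inj_subsets_split_fibre:
  assumes "C = {e \<in> A. h e = v}"
  shows "inj_subsets h A =
    inj_subsets h (A - C) \<union> (\<Union>c\<in>C. insert c ` inj_subsets h (A - C))"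
proof
  show "inj_subsets h A \<subseteq> inj_subsets h (A - C) \<union> (\<Union>c\<in>C. insert c ` inj_subsets h (A - C))"
  proof
    fix F assume F: "F \<in> inj_subsets h A"
    show "F \<in> inj_subsets h (A - C) \<union> (\<Union>c\<in>C. insert c ` inj_subsets h (A - C))"
    proof (cases "F \<inter> C = {}")
      case True
      with F show ?thesis by (auto simp: inj_subsets_def)
    next
      case False
      then obtain c where c: "c \<in> F" "c \<in> C" by blast
      with F assms have "F - {c} \<in> inj_subsets h (A - C)"
        by (auto simp: inj_subsets_def inj_on_def intro: inj_on_diff)
      moreover have "F = insert c (F - {c})" using c by blast
      ultimately show ?thesis using c by blast
    qed
  qed
  show "inj_subsets h (A - C) \<union> (\<Union>c\<in>C. insert c ` inj_subsets h (A - C)) \<subseteq> inj_subsets h A"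
    using assms by (auto simp: inj_subsets_def)
qed

lemma sum_sign_inj_subsets_split_fibre:
  assumes "finite A" and C: "C = {e \<in> A. h e = v}"
  shows "(\<Sum>F\<in>inj_subsets h A. (-1::int) ^ card F) =
    (1 - int (card C)) * (\<Sum>F\<in>inj_subsets h (A - C). (-1) ^ card F)"
proof -
  let ?S = "inj_subsets h (A - C)"
  let ?s = "\<Sum>F\<in>?S. (-1::int) ^ card F"
  have finS: "finite ?S" using \<open>finite A\<close> by (simp add: finite_inj_subsets)
  have finC: "finite C" using \<open>finite A\<close> C by simp
  have notin: "c \<notin> F" if "c \<in> C" "F \<in> ?S" for c F
    using that by (auto simp: inj_subsets_def)
  have insert_sum: "(\<Sum>F\<in>insert c ` ?S. (-1::int) ^ card F) = - ?s" if "c \<in> C" for c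
  proof -
    have "inj_on (insert c) ?S"
      using notin[OF that] by (intro inj_onI) (metis Diff_insert_absorb)
    then have "(\<Sum>F\<in>insert c ` ?S. (-1::int) ^ card F) = (\<Sum>F\<in>?S. (-1) ^ card (insert c F))"
      by (simp add: sum.reindex)
    also have "\<dots> = (\<Sum>F\<in>?S. - ((-1) ^ card F))"
      using notin[OF that] \<open>finite A\<close>
      by (intro sum.cong) (auto simp: inj_subsets_def finite_subset)
    finally show ?thesis by (simp add: sum_negf)
  qed
  have disjoint_images: "insert c ` ?S \<inter> insert c' ` ?S = {}"
    if "c \<in> C" "c' \<in> C" "c \<noteq> c'" for c c'
    using that notin by (auto simp: insert_eq_iff)
  have "(\<Sum>F\<in>(\<Union>c\<in>C. insert c ` ?S). (-1::int) ^ card F) = (\<Sum>c\<in>C. - ?s)"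
    using finC finS disjoint_images insert_sum by (subst sum.UNION_disjoint) auto
  moreover have "?S \<inter> (\<Union>c\<in>C. insert c ` ?S) = {}"
    using notin by auto
  ultimately show ?thesis
    using finC finS inj_subsets_split_fibre[OF C]
    by (simp add: sum.union_disjoint algebra_simps)
qed

lemma sum_sign_inj_subsets:
  assumes "finite V" "finite A" "h ` A \<subseteq> V"
  shows "(\<Sum>F\<in>inj_subsets h A. (-1::int) ^ card F) =
    (\<Prod>v\<in>V. 1 - int (card {e \<in> A. h e = v}))"
  using assms
proof (induction V arbitrary: A rule: finite_induct)
  case empty
  then show ?case by simp
next
  case (insert v V)
  define C where "C = {e \<in> A. h e = v}"
  have fibres: "{e \<in> A - C. h e = w} = {e \<in> A. h e = w}" if "w \<in> V" for w
    using that insert.hyps(2) by (auto simp: C_def)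
  have "h ` (A - C) \<subseteq> V"
    using insert.prems(2) by (auto simp: C_def)
  then have "(\<Sum>F\<in>inj_subsets h (A - C). (-1::int) ^ card F) =
      (\<Prod>w\<in>V. 1 - int (card {e \<in> A. h e = w}))"
    using insert.IH insert.prems(1) fibres by simp
  then show ?case
    using sum_sign_inj_subsets_split_fibre[OF insert.prems(1) C_def] insert.hyps
    by (simp add: C_def)
qed

lemma dag_DT_eq_inj_subsets:
  assumes "fin_digraph G" "dag G"
  shows "DT G = inj_subsets (head G) (arcs G)"
proof -
  have "acyclic (arc_to_ends G ` F)" if "F \<subseteq> arcs G" for F
    using assms(2) that unfolding dag_def arcs_ends_def by (meson acyclic_subset image_mono)
  moreover have "(\<forall>v. card {e \<in> F. head G e = v} \<le> 1) \<longleftrightarrow> inj_on (head G) F"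
    if "F \<subseteq> arcs G" for F
    using finite_subset[OF that fin_digraph.finite_arcs[OF assms(1)]]
    by (auto simp: card_le_Suc0_iff_eq inj_on_def)
  ultimately show ?thesis
    unfolding DT_def directed_forest_def inj_subsets_def by blast
qed

theorem lemma2p11:
  fixes G :: "('a,'b) pre_digraph"
  assumes "fin_digraph G"
    and "dag G"
    and "arcs G \<noteq> {}"
  shows "reduced_euler_char (DT G) =
    - (\<Prod>v\<in>verts G - {v \<in> verts G. in_degree G v = 0}. (1 - int (in_degree G v)))"
proof -
  interpret fin_digraph G by fact
  let ?N = "verts G - {v \<in> verts G. in_degree G v = 0}"
  have "(\<Sum>F\<in>DT G. (-1::int) ^ card F) =
      (\<Prod>v\<in>?N. 1 - int (card {e \<in> arcs G. head G e = v}))"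
    unfolding dag_DT_eq_inj_subsets[OF assms(1,2)]
    by (rule sum_sign_inj_subsets) (auto simp: in_degree_def in_arcs_def card_eq_0_iff)
  also have "\<dots> = (\<Prod>v\<in>?N. 1 - int (in_degree G v))"
    by (simp add: in_degree_def in_arcs_def)
  finally show ?thesis
    by (simp add: reduced_euler_char_def sum_negf)
qed

end
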